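(* Let $b>1$ and $\mu\ge0$. Suppose: (i) $P$ satisfies $(1/2,b)$-multiplicative-expansion on $\mathcal{X}$; (ii) $P$ is $\mathcal{A}$-separated by the ground-truth classifier, i.e. $\mathcal{R}_{\mathcal{A}}(G^* )\le\mu$; (iii) for classifiers $G$, whenever $P$ satisfies $(c,\rho)$-constant-expansion for some $c$, $\mathcal{R}_{\mathcal{A}}(G)<\rho$, and $\min_i P(\{x:G(x)=i\})>2\max\{c,\mathcal{R}_{\mathcal{A}}(G)\}$, there exists a permutation $\pi$ of $[K]$ with $P(\{x:\pi(G(x))\neq G^*(x)\})\le\max\{c,\mathcal{R}_{\mathcal{A}}(G)\}+\mathcal{R}_{\mathcal{A}}(G)$. Assume further $\min_{y\in[K]}P(\{x:G^*(x)=y\})>\max\{\frac{2}{b-1},2\}\mu$. Then any minimizer $\widehat G$ of $$\min_G \mathcal{R}_{\mathcal{A}}(G)\quad\text{subject to}\quad \min_{y\in[K]}\mathbb{E}_P[\mathbf{1}(G(x)=y)]>\max\left\{\tfrac{2}{b-1},2\right\}\mathcal{R}_{\mathcal{A}}(G)$$ (over classifiers $G:\mathcal{X}\to[K]$) satisfies $\mathrm{Err}_{\mathrm{unsup}}(\widehat G)\le\max\left\{\tfrac{2}{b-1},2\right\}\mu$.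
   Context: $P$ is a distribution on $\mathcal{X}$ with ground-truth labelling $G^*:\mathcal{X}\to[K]$, $\mathcal{Q}_i:=\{x:G^*(x)=i\}$, $P_i(S)=P(S\cap\mathcal{Q}_i)/P(\mathcal{Q}_i)$. With augmentation maps $\mathcal{T}_{wa}$ and radius $r$: $\mathcal{A}(x):=\{x':\exists T\in\mathcal{T}_{wa},\ \|x'-T(x)\|\le r\}$, $\mathcal{N}(x):=\{x':\mathcal{A}(x)\cap\mathcal{A}(x')\neq\emptyset\}$, $\mathcal{N}(S):=\bigcup_{x\in S}\mathcal{N}(x)$, $\mathcal{N}^*(S):=\bigcup_{i}(\mathcal{N}(S\cap\mathcal{Q}_i)\cap\mathcal{Q}_i)$. $(a,b)$-multiplicative-expansion: for every $i$ and $S\subseteq\mathcal{Q}_i$ with $P_i(S)\le a$, $P_i(\mathcal{N}(S))\ge\min\{bP_i(S),1\}$. $(c,\rho)$-constant-expansion: for every $S$ with $P(S)\ge c$ and $P(S\cap\mathcal{Q}_i)\le P(\mathcal{Q}_i)/2$ for all $i$, $P(\mathcal{N}^*(S)\setminus S)\ge\min\{\rho,P(S)\}$. $\mathcal{R}_{\mathcal{A}}(G):=\mathbb{E}_{x\sim P}[\mathbf{1}(\exists x'\in\mathcal{A}(x)\text{ with }G(x')\neq G(x))]$. $\mathrm{Err}_{\mathrm{unsup}}(G):=\min_{\pi}P(\{x:\pi(G(x))\neq G^*(x)\})$ over permutations $\pi$ of $[K]$. *)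

theory Defs
  imports "HOL-Probability.Probability" "HOL-Combinatorics.Permutations"
begin

text \<open>Outer probability of an arbitrary set (coincides with measure M S for
  measurable S); used for every occurrence of P(S) in the paper.\<close>
definition oprob :: "'a measure \<Rightarrow> 'a set \<Rightarrow> real" where
  "oprob M S = (INF T \<in> {T \<in> sets M. S \<inter> space M \<subseteq> T}. measure M T)"

definition cls :: "'a measure \<Rightarrow> ('a \<Rightarrow> nat) \<Rightarrow> nat \<Rightarrow> 'a set" where
  "cls M Gs i = {x \<in> space M. Gs x = i}"

definition pcond :: "'a measure \<Rightarrow> ('a \<Rightarrow> nat) \<Rightarrow> nat \<Rightarrow> 'a set \<Rightarrow> real" where
  "pcond M Gs i S = oprob M (S \<inter> cls M Gs i) / measure M (cls M Gs i)"

definition Aug :: "('a::real_normed_vector \<Rightarrow> 'a) set \<Rightarrow> real \<Rightarrow> 'a \<Rightarrow> 'a set" where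
  "Aug Tw r x = {x'. \<exists>T \<in> Tw. norm (x' - T x) \<le> r}"

definition Nb :: "('a::real_normed_vector \<Rightarrow> 'a) set \<Rightarrow> real \<Rightarrow> 'a \<Rightarrow> 'a set" where
  "Nb Tw r x = {x'. Aug Tw r x \<inter> Aug Tw r x' \<noteq> {}}"

definition NbS :: "('a::real_normed_vector \<Rightarrow> 'a) set \<Rightarrow> real \<Rightarrow> 'a set \<Rightarrow> 'a set" where
  "NbS Tw r S = (\<Union>x\<in>S. Nb Tw r x)"

definition NbStar :: "'a measure \<Rightarrow> ('a \<Rightarrow> nat) \<Rightarrow> nat \<Rightarrow>
    ('a::real_normed_vector \<Rightarrow> 'a) set \<Rightarrow> real \<Rightarrow> 'a set \<Rightarrow> 'a set" where
  "NbStar M Gs K Tw r S = (\<Union>i<K. NbS Tw r (S \<inter> cls M Gs i) \<inter> cls M Gs i)"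

definition mult_expansion :: "'a measure \<Rightarrow> ('a \<Rightarrow> nat) \<Rightarrow> nat \<Rightarrow>
    ('a::real_normed_vector \<Rightarrow> 'a) set \<Rightarrow> real \<Rightarrow> real \<Rightarrow> real \<Rightarrow> bool" where
  "mult_expansion M Gs K Tw r a b \<longleftrightarrow>
     (\<forall>i<K. \<forall>S. S \<subseteq> cls M Gs i \<longrightarrow> pcond M Gs i S \<le> a \<longrightarrow>
        pcond M Gs i (NbS Tw r S) \<ge> min (b * pcond M Gs i S) 1)"

definition const_expansion :: "'a measure \<Rightarrow> ('a \<Rightarrow> nat) \<Rightarrow> nat \<Rightarrow>
    ('a::real_normed_vector \<Rightarrow> 'a) set \<Rightarrow> real \<Rightarrow> real \<Rightarrow> real \<Rightarrow> bool" where
  "const_expansion M Gs K Tw r c \<rho> \<longleftrightarrow>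
     (\<forall>S. S \<subseteq> space M \<longrightarrow> oprob M S \<ge> c \<longrightarrow>
        (\<forall>i<K. oprob M (S \<inter> cls M Gs i) \<le> measure M (cls M Gs i) / 2) \<longrightarrow>
        oprob M (NbStar M Gs K Tw r S - S) \<ge> min \<rho> (oprob M S))"

definition RA :: "'a measure \<Rightarrow> ('a::real_normed_vector \<Rightarrow> 'a) set \<Rightarrow> real \<Rightarrow> ('a \<Rightarrow> nat) \<Rightarrow> real" where
  "RA M Tw r G = oprob M {x \<in> space M. \<exists>x' \<in> Aug Tw r x. G x' \<noteq> G x}"

definition err_unsup :: "'a measure \<Rightarrow> ('a \<Rightarrow> nat) \<Rightarrow> nat \<Rightarrow> ('a \<Rightarrow> nat) \<Rightarrow> real" where
  "err_unsup M Gs K G =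
     Min {oprob M {x \<in> space M. \<pi> (G x) \<noteq> Gs x} | \<pi>. \<pi> permutes {..<K}}"

end

theory Submission
  imports Defs
begin

text \<open>Minimising the augmentation risk under the class-balance constraint cannot do worse than
  the ground truth, which is feasible by the class-size hypothesis; so the minimiser has
  risk \<open>R \<le> \<mu>\<close>. Multiplicative expansion with factor \<open>b\<close> on sets of conditional mass at most
  \<open>1/2\<close> grows each class-restricted set by a factor \<open>min (b - 1) 1\<close>, which yields
  \<open>(\<rho>/(b-1), \<rho>)\<close>-constant expansion for every \<open>\<rho>\<close>. Applying the clustering guarantee with
  \<open>\<rho> = R + \<delta>\<close> and letting \<open>\<delta> \<rightarrow> 0\<close> bounds the error by
  \<open>max (R/(b-1)) R + R \<le> max (2/(b-1)) 2 * R\<close>.\<close>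

lemma cls_sets: "Gs \<in> measurable M (count_space UNIV) \<Longrightarrow> cls M Gs i \<in> sets M"
  using measurable_sets[of Gs M "count_space UNIV" "{i}"]
  by (simp add: cls_def vimage_def Int_def conj_commute)

context prob_space
begin

lemma oprob_attained: "\<exists>T\<in>sets M. A \<inter> space M \<subseteq> T \<and> measure M T = oprob M A"
proof -
  define C where "C = {T \<in> sets M. A \<inter> space M \<subseteq> T}"
  have C_ne: "C \<noteq> {}" unfolding C_def by auto
  have bdd: "bdd_below (measure M ` C)" by (rule bdd_belowI[of _ 0]) auto
  have oprob_C: "oprob M A = (INF T\<in>C. measure M T)" unfolding oprob_def C_def by simp
  have "\<exists>T\<in>C. measure M T < oprob M A + inverse (Suc n)" for n :: nat
  proof -
    have "(INF T\<in>C. measure M T) < oprob M A + inverse (Suc n)" using oprob_C by simp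
    then show ?thesis using cINF_less_iff[OF C_ne bdd] by blast
  qed
  then obtain T where T: "\<And>n. T n \<in> C" "\<And>n. measure M (T n) < oprob M A + inverse (Suc n)"
    by metis
  \<comment> \<open>the infimum is attained by the countable intersection of near-optimal covers\<close>
  define U where "U = (\<Inter>n. T n)"
  have "U \<in> C" using T(1) unfolding U_def C_def by auto
  then have "oprob M A \<le> measure M U" using oprob_C cINF_lower[OF bdd] by simp
  moreover have "measure M U \<le> oprob M A"
  proof (rule field_le_epsilon)
    fix e :: real assume "0 < e"
    then obtain n :: nat where n: "inverse (Suc n) < e" using reals_Archimedean by blast
    have "measure M U \<le> measure M (T n)"
      using T(1)[of n] unfolding C_def U_def by (intro finite_measure_mono) auto
    with T(2)[of n] n show "measure M U \<le> oprob M A + e" by simp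
  qed
  ultimately show ?thesis using \<open>U \<in> C\<close> unfolding C_def by auto
qed

lemma oprob_le_measure: "T \<in> sets M \<Longrightarrow> A \<inter> space M \<subseteq> T \<Longrightarrow> oprob M A \<le> measure M T"
  unfolding oprob_def by (rule cINF_lower) (auto intro: bdd_belowI[of _ 0])

lemma oprob_nonneg: "0 \<le> oprob M A"
  using oprob_attained[of A] by (metis measure_nonneg)

lemma oprob_eq_measure:
  assumes "A \<in> sets M"
  shows "oprob M A = measure M A"
proof -
  obtain T where T: "T \<in> sets M" "A \<inter> space M \<subseteq> T" "measure M T = oprob M A"
    using oprob_attained by blast
  have "measure M A \<le> measure M T"
    using T assms sets.sets_into_space by (intro finite_measure_mono) auto
  moreover have "oprob M A \<le> measure M A" by (rule oprob_le_measure[OF assms]) auto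
  ultimately show ?thesis using T by simp
qed

lemma oprob_mono: "A \<subseteq> B \<Longrightarrow> oprob M A \<le> oprob M B"
  using oprob_attained[of B] oprob_le_measure[of _ A] by fastforce

lemma oprob_Un_le: "oprob M (A \<union> B) \<le> oprob M A + oprob M B"
proof -
  obtain T where T: "T \<in> sets M" "A \<inter> space M \<subseteq> T" "measure M T = oprob M A"
    using oprob_attained by blast
  obtain U where U: "U \<in> sets M" "B \<inter> space M \<subseteq> U" "measure M U = oprob M B"
    using oprob_attained by blast
  have "oprob M (A \<union> B) \<le> measure M (T \<union> U)" using T U by (intro oprob_le_measure) auto
  also have "\<dots> \<le> measure M T + measure M U" using T U by (intro measure_Un_le) auto
  finally show ?thesis using T U by simp
qed

lemma oprob_Un_separated_ge:
  assumes "Q \<in> sets M" "A \<subseteq> Q" "B \<inter> Q = {}"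
  shows "oprob M A + oprob M B \<le> oprob M (A \<union> B)"
proof -
  obtain T where T: "T \<in> sets M" "(A \<union> B) \<inter> space M \<subseteq> T" "measure M T = oprob M (A \<union> B)"
    using oprob_attained by blast
  have "oprob M A \<le> measure M (T \<inter> Q)" using T assms by (intro oprob_le_measure) auto
  moreover have "oprob M B \<le> measure M (T - Q)" using T assms by (intro oprob_le_measure) auto
  moreover have "measure M T = measure M ((T \<inter> Q) \<union> (T - Q))"
    by (simp add: Int_Diff_Un)
  moreover have "\<dots> = measure M (T \<inter> Q) + measure M (T - Q)"
    using T assms by (intro finite_measure_Union) auto
  ultimately show ?thesis using T by simp
qed

lemma oprob_UN_le: "finite I \<Longrightarrow> oprob M (\<Union>i\<in>I. A i) \<le> (\<Sum>i\<in>I. oprob M (A i))"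
proof (induction I rule: finite_induct)
  case empty
  then show ?case using oprob_eq_measure[of "{}"] by simp
next
  case (insert j I)
  then show ?case using oprob_Un_le[of "A j" "\<Union>i\<in>I. A i"] by simp
qed

lemma oprob_UN_separated_ge:
  assumes "finite I" "\<And>i. i \<in> I \<Longrightarrow> Q i \<in> sets M" "\<And>i. i \<in> I \<Longrightarrow> A i \<subseteq> Q i"
    and "disjoint_family_on Q I"
  shows "(\<Sum>i\<in>I. oprob M (A i)) \<le> oprob M (\<Union>i\<in>I. A i)"
  using assms
proof (induction I rule: finite_induct)
  case empty
  then show ?case using oprob_nonneg by simp
next
  case (insert j I)
  have "(\<Union>i\<in>I. A i) \<inter> Q j = {}"
    using insert.prems(2,3) insert.hyps(2) unfolding disjoint_family_on_def by fastforce
  then have "oprob M (A j) + oprob M (\<Union>i\<in>I. A i) \<le> oprob M (A j \<union> (\<Union>i\<in>I. A i))"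
    using insert.prems by (intro oprob_Un_separated_ge[of "Q j"]) auto
  moreover have "(\<Sum>i\<in>I. oprob M (A i)) \<le> oprob M (\<Union>i\<in>I. A i)"
    using insert.prems by (intro insert.IH) (auto simp: disjoint_family_on_def)
  ultimately show ?case using insert.hyps by simp
qed
end

lemma mult_expansion_class_growth:
  fixes M :: "'a::real_normed_vector measure"
  assumes "prob_space M"
    and mult: "mult_expansion M Gs K Tw r (1/2) b" and b: "b > 1" and i: "i < K"
    and Q_pos: "measure M (cls M Gs i) > 0"
    and half: "oprob M (S \<inter> cls M Gs i) \<le> measure M (cls M Gs i) / 2"
  shows "min (b - 1) 1 * oprob M (S \<inter> cls M Gs i)
           \<le> oprob M (NbS Tw r (S \<inter> cls M Gs i) \<inter> cls M Gs i - S)"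
proof -
  interpret prob_space M by fact
  define Q where "Q = cls M Gs i"
  define a where "a = oprob M (S \<inter> Q)"
  define n where "n = oprob M (NbS Tw r (S \<inter> Q) \<inter> Q)"
  have a_nonneg: "0 \<le> a" unfolding a_def by (rule oprob_nonneg)
  have a_half: "2 * a \<le> measure M Q" using half unfolding a_def Q_def by simp
  have "pcond M Gs i (S \<inter> Q) = a / measure M Q"
    unfolding pcond_def a_def Q_def by (simp add: Int_assoc)
  moreover have "a / measure M Q \<le> 1/2" using a_half Q_pos by (simp add: Q_def field_simps)
  ultimately have "min (b * (a / measure M Q)) 1 \<le> pcond M Gs i (NbS Tw r (S \<inter> Q))"
    using mult i unfolding mult_expansion_def Q_def by (metis Int_lower2)
  then have "min (b * (a / measure M Q)) 1 \<le> n / measure M Q"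
    unfolding pcond_def n_def Q_def .
  then have grow: "min (b * a) (measure M Q) \<le> n"
    using Q_pos by (auto simp: Q_def min_def field_simps split: if_splits)
  have "n \<le> oprob M ((NbS Tw r (S \<inter> Q) \<inter> Q - S) \<union> (S \<inter> Q))"
    unfolding n_def by (intro oprob_mono) auto
  also have "\<dots> \<le> oprob M (NbS Tw r (S \<inter> Q) \<inter> Q - S) + a"
    unfolding a_def by (rule oprob_Un_le)
  finally have "min (b * a) (measure M Q) - a \<le> oprob M (NbS Tw r (S \<inter> Q) \<inter> Q - S)"
    using grow by simp
  moreover have "min (b - 1) 1 * a \<le> min (b * a) (measure M Q) - a"
  proof (cases "b \<le> 2")
    case True
    then have "b * a \<le> 2 * a" using a_nonneg by (intro mult_right_mono)
    then show ?thesis using True a_half by (simp add: min_def algebra_simps)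
  next
    case False
    then have "2 * a \<le> b * a" using a_nonneg by (intro mult_right_mono) auto
    then show ?thesis using False a_half by (simp add: min_def algebra_simps)
  qed
  ultimately show ?thesis unfolding a_def Q_def by simp
qed

lemma mult_expansion_imp_const_expansion:
  fixes M :: "'a::real_normed_vector measure"
  assumes P: "prob_space M"
    and Gs_range: "\<forall>x. Gs x < K" and Gs_meas: "Gs \<in> measurable M (count_space UNIV)"
    and b: "b > 1" and mult: "mult_expansion M Gs K Tw r (1/2) b"
    and Q_pos: "\<forall>i<K. measure M (cls M Gs i) > 0"
  shows "const_expansion M Gs K Tw r (\<rho> / (b - 1)) \<rho>"
  unfolding const_expansion_def
proof (intro allI impI)
  interpret prob_space M by (rule P)
  fix S assume S: "S \<subseteq> space M" and large: "\<rho> / (b - 1) \<le> oprob M S"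
    and half: "\<forall>i<K. oprob M (S \<inter> cls M Gs i) \<le> measure M (cls M Gs i) / 2"
  define g where "g = min (b - 1) 1"
  define T where "T i = NbS Tw r (S \<inter> cls M Gs i) \<inter> cls M Gs i - S" for i
  have "S = (\<Union>i<K. S \<inter> cls M Gs i)"
    using S Gs_range by (auto simp: cls_def)
  then have "oprob M S \<le> (\<Sum>i<K. oprob M (S \<inter> cls M Gs i))"
    using oprob_UN_le[of "{..<K}" "\<lambda>i. S \<inter> cls M Gs i"] by simp
  then have "g * oprob M S \<le> g * (\<Sum>i<K. oprob M (S \<inter> cls M Gs i))"
    using b by (intro mult_left_mono) (auto simp: g_def)
  also have "\<dots> = (\<Sum>i<K. g * oprob M (S \<inter> cls M Gs i))"
    by (rule sum_distrib_left)
  also have "\<dots> \<le> (\<Sum>i<K. oprob M (T i))"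
    using mult b Q_pos half unfolding g_def T_def
    by (intro sum_mono mult_expansion_class_growth[OF P]) auto
  also have "\<dots> \<le> oprob M (\<Union>i<K. T i)"
    by (intro oprob_UN_separated_ge[where Q = "cls M Gs"] cls_sets[OF Gs_meas])
       (auto simp: T_def disjoint_family_on_def cls_def)
  also have "(\<Union>i<K. T i) = NbStar M Gs K Tw r S - S"
    unfolding NbStar_def T_def by auto
  finally have grow: "g * oprob M S \<le> oprob M (NbStar M Gs K Tw r S - S)" .
  have "min \<rho> (oprob M S) \<le> g * oprob M S"
  proof (cases "b \<le> 2")
    case True
    then show ?thesis using large b by (simp add: g_def pos_divide_le_eq min.coboundedI1 mult.commute)
  next
    case False
    then show ?thesis by (simp add: g_def)
  qed
  with grow show "min \<rho> (oprob M S) \<le> oprob M (NbStar M Gs K Tw r S - S)" by simp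
qed

lemma err_unsup_le:
  "\<pi> permutes {..<K} \<Longrightarrow> err_unsup M Gs K G \<le> oprob M {x \<in> space M. \<pi> (G x) \<noteq> Gs x}"
  unfolding err_unsup_def by (rule Min_le) (auto simp: finite_permutations)

definition clustering_guarantee ::
    "'a measure \<Rightarrow> ('a \<Rightarrow> nat) \<Rightarrow> nat \<Rightarrow> ('a::real_normed_vector \<Rightarrow> 'a) set \<Rightarrow> real \<Rightarrow> bool" where
  "clustering_guarantee M Gs K Tw r \<longleftrightarrow>
     (\<forall>G c \<rho>. (\<forall>x. G x < K) \<longrightarrow> const_expansion M Gs K Tw r c \<rho> \<longrightarrow>
        RA M Tw r G < \<rho> \<longrightarrow>
        (\<forall>i<K. oprob M {x \<in> space M. G x = i} > 2 * max c (RA M Tw r G)) \<longrightarrow>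
        (\<exists>\<pi>. \<pi> permutes {..<K} \<and>
           oprob M {x \<in> space M. \<pi> (G x) \<noteq> Gs x} \<le> max c (RA M Tw r G) + RA M Tw r G))"

lemma err_unsup_le_by_clustering:
  fixes M :: "'a::real_normed_vector measure"
  assumes "prob_space M" and cluster: "clustering_guarantee M Gs K Tw r" and b: "b > 1"
    and const: "\<And>\<rho>. const_expansion M Gs K Tw r (\<rho> / (b - 1)) \<rho>"
    and G_range: "\<forall>x. G x < K"
    and balanced: "\<forall>y<K. oprob M {x \<in> space M. G x = y} > max (2 / (b - 1)) 2 * RA M Tw r G"
  shows "err_unsup M Gs K G \<le> max (2 / (b - 1)) 2 * RA M Tw r G"
proof -
  interpret prob_space M by fact
  define R where "R = RA M Tw r G"
  define g where "g \<delta> = max ((R + \<delta>) / (b - 1)) R" for \<delta>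
  have R_nonneg: "0 \<le> R" unfolding R_def RA_def by (rule oprob_nonneg)
  have two_g0: "2 * g 0 = max (2 / (b - 1)) 2 * R"
    using R_nonneg by (simp add: g_def max_mult_distrib_left max_mult_distrib_right)
  have "isCont g 0" unfolding g_def using b by (intro continuous_intros) auto
  then have g_lim: "(g \<longlongrightarrow> g 0) (at_right 0)"
    by (simp add: isCont_def filterlim_at_split)
  have "\<forall>\<^sub>F \<delta> in at_right 0. \<forall>i\<in>{..<K}. 2 * g \<delta> < oprob M {x \<in> space M. G x = i}"
    using balanced two_g0 unfolding R_def
    by (intro eventually_ball_finite ballI order_tendstoD(2)[OF tendsto_mult_left[OF g_lim]]) auto
  then have "\<forall>\<^sub>F \<delta> in at_right 0. err_unsup M Gs K G \<le> g \<delta> + R"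
    using eventually_at_right_less
  proof eventually_elim
    case (elim \<delta>)
    then have risk: "RA M Tw r G < R + \<delta>"
      and feasible: "\<forall>i<K. 2 * max ((R + \<delta>) / (b - 1)) (RA M Tw r G) < oprob M {x \<in> space M. G x = i}"
      unfolding R_def g_def by auto
    obtain \<pi> where "\<pi> permutes {..<K}"
      "oprob M {x \<in> space M. \<pi> (G x) \<noteq> Gs x} \<le> max ((R + \<delta>) / (b - 1)) R + R"
      using cluster[unfolded clustering_guarantee_def, rule_format,
          OF G_range[rule_format] const risk feasible[rule_format]]
      unfolding R_def by blast
    then show ?case using err_unsup_le[of \<pi> K M Gs G] unfolding g_def by linarith
  qed
  then have "err_unsup M Gs K G \<le> g 0 + R"
    by (intro tendsto_lowerbound[OF tendsto_add[OF g_lim tendsto_const]]) simp_all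
  also have "\<dots> \<le> 2 * g 0" by (simp add: g_def)
  finally show ?thesis using two_g0 R_def by simp
qed

theorem theorem1:
  fixes M :: "'a::real_normed_vector measure"
    and Gs :: "'a \<Rightarrow> nat" and K :: nat
    and Tw :: "('a \<Rightarrow> 'a) set" and r b \<mu> :: real
    and Ghat :: "'a \<Rightarrow> nat"
  assumes P: "prob_space M"
    and Gs_range: "\<forall>x. Gs x < K"
    and Gs_meas: "Gs \<in> measurable M (count_space UNIV)"
    and b: "b > 1" and mu: "\<mu> \<ge> 0"
    and mult: "mult_expansion M Gs K Tw r (1/2) b"
    and sep: "RA M Tw r Gs \<le> \<mu>"
    and cluster: "\<forall>G c \<rho>. (\<forall>x. G x < K) \<longrightarrow> const_expansion M Gs K Tw r c \<rho> \<longrightarrow>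
        RA M Tw r G < \<rho> \<longrightarrow>
        (\<forall>i<K. oprob M {x \<in> space M. G x = i} > 2 * max c (RA M Tw r G)) \<longrightarrow>
        (\<exists>\<pi>. \<pi> permutes {..<K} \<and>
           oprob M {x \<in> space M. \<pi> (G x) \<noteq> Gs x} \<le> max c (RA M Tw r G) + RA M Tw r G)"
    and classes: "\<forall>y<K. measure M (cls M Gs y) > max (2 / (b - 1)) 2 * \<mu>"
    and Ghat_range: "\<forall>x. Ghat x < K"
    and Ghat_feas: "\<forall>y<K. oprob M {x \<in> space M. Ghat x = y} > max (2 / (b - 1)) 2 * RA M Tw r Ghat"
    and Ghat_min: "\<forall>G. (\<forall>x. G x < K) \<longrightarrow>
        (\<forall>y<K. oprob M {x \<in> space M. G x = y} > max (2 / (b - 1)) 2 * RA M Tw r G) \<longrightarrow>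
        RA M Tw r Ghat \<le> RA M Tw r G"
  shows "err_unsup M Gs K Ghat \<le> max (2 / (b - 1)) 2 * \<mu>"
proof -
  interpret prob_space M by (rule P)
  define m where "m = max (2 / (b - 1)) 2"
  have m_pos: "0 < m" unfolding m_def by simp
  have Q_pos: "\<forall>i<K. measure M (cls M Gs i) > 0"
    using classes mu m_pos unfolding m_def by (smt (verit) mult_nonneg_nonneg)
  have Gs_feasible: "\<forall>y<K. oprob M {x \<in> space M. Gs x = y} > m * RA M Tw r Gs"
    using classes sep m_pos oprob_eq_measure[OF cls_sets[OF Gs_meas]]
    unfolding m_def cls_def by (smt (verit) mult_left_mono)
  then have Ghat_risk: "RA M Tw r Ghat \<le> \<mu>"
    using Ghat_min Gs_range sep unfolding m_def by (meson order_trans)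
  have "err_unsup M Gs K Ghat \<le> m * RA M Tw r Ghat"
    using err_unsup_le_by_clustering[OF P _ b _ Ghat_range Ghat_feas]
      mult_expansion_imp_const_expansion[OF P Gs_range Gs_meas b mult Q_pos] cluster
    unfolding m_def clustering_guarantee_def by blast
  also have "\<dots> \<le> m * \<mu>" using Ghat_risk m_pos by simp
  finally show ?thesis unfolding m_def .
qed

end
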